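(* Let $\alpha,\beta>0$, $\xi\sim\mathrm{Beta}(\alpha,\beta)$, let $s>-1$ be real, $a\in\mathbb{C}$, and $k>-\alpha$ real. Then $$\mathbb{E}\left[\frac{\xi^k}{(1+s\sqrt{\xi})^a}\right]=\frac{(\alpha)_k}{(\alpha+\beta)_k}\Bigg[{}_3F_2\!\left(\begin{matrix}\frac a2,\ \frac{a+1}{2},\ \alpha+k\\ \frac12,\ \alpha+\beta+k\end{matrix};s^2\right)-sa\frac{(\alpha+k)_{1/2}}{(\alpha+\beta+k)_{1/2}}\,{}_3F_2\!\left(\begin{matrix}\frac{a+1}{2},\ \frac{a+2}{2},\ \alpha+k+\frac12\\ \frac32,\ \alpha+\beta+k+\frac12\end{matrix};s^2\right)\Bigg].$$ In particular, for $\beta=(p-1)\alpha$ with $p\ge2$ an integer, $k=0$, $a=1$: $$\mathbb{E}\left[\frac{1}{1+s\sqrt{\xi}}\right]={}_2F_1\!\left(\begin{matrix}1,\ \alpha\\ p\alpha\end{matrix};s^2\right)-s\frac{(\alpha)_{1/2}}{(p\alpha)_{1/2}}\,{}_2F_1\!\left(\begin{matrix}1,\ \alpha+\frac12\\ p\alpha+\frac12\end{matrix};s^2\right).$$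
   Context: $(x)_a=\Gamma(x+a)/\Gamma(x)$ denotes the Pochhammer symbol. ${}_3F_2\!\left(\begin{matrix}a_1,a_2,a_3\\ b_1,b_2\end{matrix};t\right)=\sum_{n\ge0}\frac{(a_1)_n(a_2)_n(a_3)_n}{(b_1)_n(b_2)_n}\frac{t^n}{n!}$ and ${}_2F_1$ is the Gauss hypergeometric function, understood via analytic continuation outside the disc of convergence of the series. *)

theory Defs
  imports "HOL-Probability.Probability" "HOL-Complex_Analysis.Complex_Analysis"
begin

definition poch_r :: "real \<Rightarrow> real \<Rightarrow> real" where
  "poch_r x a = Gamma (x + a) / Gamma x"

definition hyp3F2 :: "complex \<Rightarrow> complex \<Rightarrow> complex \<Rightarrow> complex \<Rightarrow> complex \<Rightarrow> complex \<Rightarrow> complex" where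
  "hyp3F2 a1 a2 a3 b1 b2 t =
     (\<Sum>n. pochhammer a1 n * pochhammer a2 n * pochhammer a3 n
            / (pochhammer b1 n * pochhammer b2 n) * t ^ n / fact n)"

definition hyp2F1 :: "complex \<Rightarrow> complex \<Rightarrow> complex \<Rightarrow> complex \<Rightarrow> complex" where
  "hyp2F1 a1 a2 b1 t =
     (\<Sum>n. pochhammer a1 n * pochhammer a2 n / pochhammer b1 n * t ^ n / fact n)"

definition beta_density :: "real \<Rightarrow> real \<Rightarrow> real \<Rightarrow> real" where
  "beta_density \<alpha> \<beta> x =
     (if 0 < x \<and> x < 1 then x powr (\<alpha> - 1) * (1 - x) powr (\<beta> - 1) / Beta \<alpha> \<beta> else 0)"

end

theory Submission
  imports Defs
begin

text \<open>
  For \<open>|z| < 1\<close> expand \<open>(1 + z sqrt x) powr (-a)\<close> by the binomial series and integrate term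
  by term against the Beta density; the \<open>m\<close>-th term carries the moment
  \<open>E[\<xi> powr (k + m/2)] = B(\<alpha> + k + m/2, \<beta>) / B(\<alpha>, \<beta>)\<close>. Splitting \<open>m\<close> into even and odd
  values and rewriting the binomial coefficients with the duplication formula for Pochhammer
  symbols produces the two \<open>3F2\<close> series. For \<open>Re z > -1\<close> and \<open>x \<in> [0,1]\<close> the base
  \<open>1 + z sqrt x\<close> has positive real part, so the expectation is holomorphic on that half-plane
  (differentiation under the integral sign) and is the analytic continuation of the series to
  every real \<open>s > -1\<close>. For \<open>k = 0\<close> and \<open>a = 1\<close> an upper parameter of each \<open>3F2\<close> cancels
  against a lower one.
\<close>

section \<open>Differentiation under the integral sign\<close>

lemma integrable_scaleR_continuous_on_compact:
  fixes w :: "real \<Rightarrow> real" and g :: "real \<Rightarrow> 'b::{banach, second_countable_topology}"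
  assumes w: "integrable lborel w" and w0: "\<And>x. x \<notin> K \<Longrightarrow> w x = 0"
    and K: "compact K" and g: "continuous_on K g"
  shows "integrable lborel (\<lambda>x. w x *\<^sub>R g x)"
proof -
  obtain B where B: "\<And>x. x \<in> K \<Longrightarrow> norm (g x) \<le> B"
    using compact_imp_bounded[OF compact_continuous_image[OF g K]] by (auto simp: bounded_iff)
  have "(\<lambda>x. indicator K x *\<^sub>R g x) \<in> borel_measurable borel"
    using K g by (intro borel_measurable_continuous_on_indicator) (auto intro: borel_closed compact_imp_closed)
  then have meas: "(\<lambda>x. w x *\<^sub>R (indicator K x *\<^sub>R g x)) \<in> borel_measurable lborel"
    using w by measurable
  have eq: "(\<lambda>x. w x *\<^sub>R g x) = (\<lambda>x. w x *\<^sub>R (indicator K x *\<^sub>R g x))"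
    using w0 by (auto simp: indicator_def fun_eq_iff)
  show ?thesis
    unfolding eq
  proof (rule Bochner_Integration.integrable_bound[OF _ meas])
    show "integrable lborel (\<lambda>x. B * w x)" using w by simp
    show "AE x in lborel. norm (w x *\<^sub>R (indicator K x *\<^sub>R g x)) \<le> norm (B * w x)"
    proof (intro AE_I2)
      fix x
      have "\<bar>w x\<bar> * norm (g x) \<le> \<bar>w x\<bar> * \<bar>B\<bar>" if "x \<in> K"
        using B[OF that] by (intro mult_left_mono) auto
      then show "norm (w x *\<^sub>R (indicator K x *\<^sub>R g x)) \<le> norm (B * w x)"
        by (simp add: indicator_def abs_mult mult.commute)
    qed
  qed
qed

lemma norm_remainder_le_of_deriv_near:
  fixes f f' :: "'a::real_normed_field \<Rightarrow> 'a"
  assumes deriv: "\<And>u. u \<in> ball z0 d \<Longrightarrow> (f has_field_derivative f' u) (at u)"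
    and near: "\<And>u. u \<in> ball z0 d \<Longrightarrow> norm (f' u - f' z0) \<le> \<epsilon>"
    and y: "y \<in> ball z0 d"
  shows "norm (f y - f z0 - (y - z0) * f' z0) \<le> \<epsilon> * norm (y - z0)"
proof -
  have "norm ((f y - y * f' z0) - (f z0 - z0 * f' z0)) \<le> \<epsilon> * norm (y - z0)"
  proof (rule field_differentiable_bound[where f = "\<lambda>u. f u - u * f' z0"
          and f' = "\<lambda>u. f' u - f' z0" and S = "ball z0 d"])
    fix u assume "u \<in> ball z0 d"
    then have "((\<lambda>u. f u - u * f' z0) has_field_derivative f' u - f' z0) (at u)"
      by (auto intro!: derivative_eq_intros deriv)
    then show "((\<lambda>u. f u - u * f' z0) has_field_derivative f' u - f' z0) (at u within ball z0 d)"
      by (rule has_field_derivative_at_within)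
  qed (use y near in \<open>auto intro: le_less_trans[OF zero_le_dist]\<close>)
  then show ?thesis by (simp add: algebra_simps)
qed

lemma uniform_remainder_bound_param:
  fixes h h' :: "complex \<Rightarrow> 'a::metric_space \<Rightarrow> complex"
  assumes U: "open U" and z0: "z0 \<in> U" and K: "compact K"
    and hd: "\<And>z x. z \<in> U \<Longrightarrow> x \<in> K \<Longrightarrow> ((\<lambda>z. h z x) has_field_derivative h' z x) (at z)"
    and hc': "continuous_on (U \<times> K) (\<lambda>(z, x). h' z x)"
    and e: "e > 0"
  shows "\<exists>d>0. ball z0 d \<subseteq> U \<and>
           (\<forall>y\<in>ball z0 d. \<forall>x\<in>K. norm (h y x - h z0 x - (y - z0) * h' z0 x) \<le> e * norm (y - z0))"
proof -
  obtain r where r: "r > 0" "cball z0 r \<subseteq> U"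
    using U z0 open_contains_cball by blast
  have "uniformly_continuous_on (cball z0 r \<times> K) (\<lambda>(z, x). h' z x)"
    using r K by (intro compact_uniformly_continuous continuous_on_subset[OF hc']) (auto intro: compact_Times)
  then obtain \<delta> where \<delta>: "\<delta> > 0" and close: "\<And>p q. p \<in> cball z0 r \<times> K \<Longrightarrow> q \<in> cball z0 r \<times> K
      \<Longrightarrow> dist q p < \<delta> \<Longrightarrow> dist ((\<lambda>(z, x). h' z x) q) ((\<lambda>(z, x). h' z x) p) < e"
    using e unfolding uniformly_continuous_on_def by metis
  define d where "d = min r \<delta>"
  have "norm (h y x - h z0 x - (y - z0) * h' z0 x) \<le> e * norm (y - z0)"
    if y: "y \<in> ball z0 d" and x: "x \<in> K" for y x
  proof (rule norm_remainder_le_of_deriv_near[OF _ _ y])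
    fix u assume u: "u \<in> ball z0 d"
    then show "((\<lambda>z. h z x) has_field_derivative h' u x) (at u)"
      using r x by (intro hd) (auto simp: d_def)
    show "norm (h' u x - h' z0 x) \<le> e"
      using close[of "(z0, x)" "(u, x)"] u x r
      by (auto simp: d_def dist_Pair_Pair dist_commute dist_norm)
  qed
  moreover have "ball z0 d \<subseteq> U"
    using r by (auto simp: d_def)
  ultimately show ?thesis
    using r \<delta> by (intro exI[of _ d]) (auto simp: d_def)
qed

lemma has_field_derivative_integral_param:
  fixes w :: "real \<Rightarrow> real" and h h' :: "complex \<Rightarrow> real \<Rightarrow> complex"
  assumes U: "open U" and z0: "z0 \<in> U" and K: "compact K"
    and w: "integrable lborel w" and w0: "\<And>x. x \<notin> K \<Longrightarrow> w x = 0"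
    and hd: "\<And>z x. z \<in> U \<Longrightarrow> x \<in> K \<Longrightarrow> ((\<lambda>z. h z x) has_field_derivative h' z x) (at z)"
    and hc: "\<And>z. z \<in> U \<Longrightarrow> continuous_on K (h z)"
    and hc': "continuous_on (U \<times> K) (\<lambda>(z, x). h' z x)"
  shows "((\<lambda>z. LINT x|lborel. w x *\<^sub>R h z x) has_field_derivative (LINT x|lborel. w x *\<^sub>R h' z0 x)) (at z0)"
proof -
  define G where "G = (\<lambda>z. LINT x|lborel. w x *\<^sub>R h z x)"
  define D where "D = (LINT x|lborel. w x *\<^sub>R h' z0 x)"
  define L where "L = (LINT x|lborel. norm (w x)) + 1"
  have L: "L > 0"
    unfolding L_def by (intro add_nonneg_pos integral_nonneg_AE) auto
  have int_h: "integrable lborel (\<lambda>x. w x *\<^sub>R h z x)" if "z \<in> U" for z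
    using w w0 K hc[OF that] by (rule integrable_scaleR_continuous_on_compact)
  have "continuous_on K (h' z0)"
    using z0 by (intro continuous_on_compose2[OF hc', of _ "\<lambda>x. (z0, x)", simplified]
        continuous_on_Pair continuous_on_const continuous_on_id) auto
  then have int_h': "integrable lborel (\<lambda>x. w x *\<^sub>R h' z0 x)"
    using w w0 K by (intro integrable_scaleR_continuous_on_compact)
  have "\<exists>d>0. \<forall>y. norm (y - z0) < d \<longrightarrow> norm (G y - G z0 - D * (y - z0)) \<le> e * norm (y - z0)"
    if e: "e > 0" for e
  proof -
    obtain d where d: "d > 0" "ball z0 d \<subseteq> U" and rem: "\<And>y x. y \<in> ball z0 d \<Longrightarrow> x \<in> K
        \<Longrightarrow> norm (h y x - h z0 x - (y - z0) * h' z0 x) \<le> e / L * norm (y - z0)"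
      using uniform_remainder_bound_param[OF U z0 K hd hc', of "e / L"] e L by auto
    have "norm (G y - G z0 - D * (y - z0)) \<le> e * norm (y - z0)" if y: "y \<in> ball z0 d" for y
    proof -
      have yU: "y \<in> U" using y d by auto
      have eq: "(\<lambda>x. w x *\<^sub>R (h y x - h z0 x - (y - z0) * h' z0 x))
          = (\<lambda>x. w x *\<^sub>R h y x - w x *\<^sub>R h z0 x - (y - z0) * (w x *\<^sub>R h' z0 x))"
        by (simp add: fun_eq_iff algebra_simps)
      have int_diff: "integrable lborel (\<lambda>x. w x *\<^sub>R h y x - w x *\<^sub>R h z0 x)"
        using int_h[OF yU] int_h[OF z0] by (rule Bochner_Integration.integrable_diff)
      have "G y - G z0 - D * (y - z0) = (LINT x|lborel. w x *\<^sub>R (h y x - h z0 x - (y - z0) * h' z0 x))"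
        unfolding eq G_def D_def
        by (subst Bochner_Integration.integral_diff[OF int_diff integrable_mult_right[OF int_h']],
            subst Bochner_Integration.integral_diff[OF int_h[OF yU] int_h[OF z0]],
            subst integral_mult_right_zero) (simp add: mult.commute)
      also have "norm \<dots> \<le> (LINT x|lborel. norm (w x) * (e / L * norm (y - z0)))"
      proof (rule Bochner_Integration.integral_norm_bound_integral)
        show "integrable lborel (\<lambda>x. w x *\<^sub>R (h y x - h z0 x - (y - z0) * h' z0 x))"
          unfolding eq by (rule Bochner_Integration.integrable_diff[OF int_diff integrable_mult_right[OF int_h']])
        show "norm (w x *\<^sub>R (h y x - h z0 x - (y - z0) * h' z0 x)) \<le> norm (w x) * (e / L * norm (y - z0))" for x
          using mult_left_mono[OF rem[OF y, of x], of "\<bar>w x\<bar>"] w0[of x] by (cases "x \<in> K") auto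
      qed (use w in simp)
      also have "\<dots> = (L - 1) / L * e * norm (y - z0)"
        by (simp add: L_def)
      also have "\<dots> \<le> e * norm (y - z0)"
        using L e by (intro mult_right_mono) (auto simp: field_simps)
      finally show ?thesis .
    qed
    then show ?thesis
      using d by (intro exI[of _ d]) (auto simp: dist_norm norm_minus_commute)
  qed
  then have "(G has_derivative (*) D) (at z0)"
    by (simp add: has_derivative_at_alt bounded_linear_mult_right)
  then show ?thesis by (simp add: G_def D_def has_field_derivative_def)
qed

section \<open>The Beta distribution\<close>

lemma Beta_real_pos: "a > 0 \<Longrightarrow> b > 0 \<Longrightarrow> Beta a b > (0::real)"
  unfolding Beta_def by (intro divide_pos_pos mult_pos_pos Gamma_real_pos) auto

lemma beta_density_nonneg: "\<alpha> > 0 \<Longrightarrow> \<beta> > 0 \<Longrightarrow> beta_density \<alpha> \<beta> x \<ge> 0"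
  unfolding beta_density_def using Beta_real_pos[of \<alpha> \<beta>] by auto

lemma borel_measurable_beta_density [measurable]: "beta_density \<alpha> \<beta> \<in> borel_measurable borel"
  unfolding beta_density_def by measurable

lemma beta_density_mult_powr:
  "beta_density \<alpha> \<beta> x * x powr c =
     indicator {0..1} x * (x powr (\<alpha> + c - 1) * (1 - x) powr (\<beta> - 1)) / Beta \<alpha> \<beta>"
  by (cases "0 < x \<and> x < 1")
     (auto simp: beta_density_def indicator_def powr_add[symmetric] algebra_simps)

lemma sqrt_power_eq_powr: "x > 0 \<Longrightarrow> sqrt x ^ m = x powr (real m / 2)"
  by (simp add: powr_half_sqrt_powr powr_realpow real_sqrt_power)

lemma has_bochner_integral_beta_density_powr:
  assumes "\<alpha> + c > 0" "\<beta> > 0"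
  shows "has_bochner_integral lborel (\<lambda>x. beta_density \<alpha> \<beta> x * x powr c) (Beta (\<alpha> + c) \<beta> / Beta \<alpha> \<beta>)"
proof -
  define f where "f = (\<lambda>x. x powr (\<alpha> + c - 1) * (1 - x) powr (\<beta> - 1))"
  have "set_integrable lborel {0..1} f"
    using integrable_Beta[OF assms] by (simp add: f_def)
  moreover have "(LINT x:{0..1}|lborel. f x) = Beta (\<alpha> + c) \<beta>"
    using has_integral_Beta_real[OF assms] set_borel_integral_eq_integral(2)[OF calculation]
    by (simp add: f_def integral_unique)
  ultimately show ?thesis
    unfolding beta_density_mult_powr has_bochner_integral_iff set_integrable_def set_lebesgue_integral_def
    by (auto simp: f_def)
qed

lemma integrable_beta_density_powr:
  "\<alpha> + c > 0 \<Longrightarrow> \<beta> > 0 \<Longrightarrow> integrable lborel (\<lambda>x. beta_density \<alpha> \<beta> x * x powr c)"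
  using has_bochner_integral_beta_density_powr has_bochner_integral_iff by blast

lemma beta_density_eq_0: "x \<notin> {0<..<1} \<Longrightarrow> beta_density \<alpha> \<beta> x = 0"
  by (auto simp: beta_density_def)

lemma integral_beta_density_powr_sqrt_power:
  assumes "\<alpha> + k > 0" "\<beta> > 0"
  shows "(LINT x|lborel. (beta_density \<alpha> \<beta> x * x powr k) *\<^sub>R complex_of_real (sqrt x) ^ m)
           = complex_of_real (Beta (\<alpha> + k + real m / 2) \<beta> / Beta \<alpha> \<beta>)"
proof -
  have "(\<lambda>x. (beta_density \<alpha> \<beta> x * x powr k) *\<^sub>R complex_of_real (sqrt x) ^ m)
      = (\<lambda>x. complex_of_real (beta_density \<alpha> \<beta> x * x powr (k + real m / 2)))"
    by (rule ext, cases "x > 0")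
       (auto simp: beta_density_def scaleR_conv_of_real sqrt_power_eq_powr powr_add simp flip: of_real_power)
  moreover have "(LINT x|lborel. beta_density \<alpha> \<beta> x * x powr (k + real m / 2))
      = Beta (\<alpha> + k + real m / 2) \<beta> / Beta \<alpha> \<beta>"
    using has_bochner_integral_beta_density_powr[of \<alpha> "k + real m / 2" \<beta>] assms
    by (auto simp: has_bochner_integral_iff add.assoc)
  ultimately show ?thesis
    by (simp only: integral_complex_of_real)
qed

lemma integral_beta_distributed:
  fixes f :: "real \<Rightarrow> 'b::{banach, second_countable_topology}"
  assumes distr: "distributed M lborel \<xi> (\<lambda>x. ennreal (beta_density \<alpha> \<beta> x))"
    and "\<alpha> > 0" "\<beta> > 0" and [measurable]: "f \<in> borel_measurable borel"
  shows "(\<integral>\<omega>. f (\<xi> \<omega>) \<partial>M) = (LINT x|lborel. beta_density \<alpha> \<beta> x *\<^sub>R f x)"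
proof -
  have "(\<integral>\<omega>. f (\<xi> \<omega>) \<partial>M) = integral\<^sup>L (distr M lborel \<xi>) f"
    using distributed_measurable[OF distr] by (subst integral_distr) auto
  also have "\<dots> = integral\<^sup>L (density lborel (\<lambda>x. ennreal (beta_density \<alpha> \<beta> x))) f"
    by (simp add: distributed_distr_eq_density[OF distr])
  also have "\<dots> = (LINT x|lborel. beta_density \<alpha> \<beta> x *\<^sub>R f x)"
    using beta_density_nonneg[OF assms(2,3)] by (subst integral_density) auto
  finally show ?thesis .
qed

lemma AE_beta_distributed_in_unit_interval:
  assumes distr: "distributed M lborel \<xi> (\<lambda>x. ennreal (beta_density \<alpha> \<beta> x))"
  shows "AE \<omega> in M. 0 < \<xi> \<omega> \<and> \<xi> \<omega> < 1"
proof -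
  have "AE x in distr M lborel \<xi>. 0 < x \<and> x < 1"
    unfolding distributed_distr_eq_density[OF distr]
    by (subst AE_density) (auto simp: beta_density_def)
  then show ?thesis
    using distributed_measurable[OF distr] by (subst (asm) AE_distr_iff) auto
qed

section \<open>The moment function and its holomorphy\<close>

definition beta_root_moment :: "real \<Rightarrow> real \<Rightarrow> real \<Rightarrow> complex \<Rightarrow> complex \<Rightarrow> complex" where
  "beta_root_moment \<alpha> \<beta> k a z =
     (LINT x|lborel. (beta_density \<alpha> \<beta> x * x powr k) *\<^sub>R (1 + z * of_real (sqrt x)) powr (- a))"

lemma integral_eq_beta_root_moment:
  assumes "distributed M lborel \<xi> (\<lambda>x. ennreal (beta_density \<alpha> \<beta> x))" "\<alpha> > 0" "\<beta> > 0"
  shows "(\<integral>\<omega>. of_real (\<xi> \<omega> powr k) / (1 + z * of_real (sqrt (\<xi> \<omega>))) powr a \<partial>M)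
           = beta_root_moment \<alpha> \<beta> k a z"
  unfolding beta_root_moment_def
  by (subst integral_beta_distributed[OF assms]) (auto simp: powr_minus scaleR_conv_of_real divide_inverse mult.assoc)

lemma Re_one_plus_mult_sqrt_pos:
  assumes "Re z > -1" and "x \<in> {0..1}"
  shows "Re (1 + z * of_real (sqrt x)) > 0"
proof -
  have s: "0 \<le> sqrt x" "sqrt x \<le> 1" using assms(2) by auto
  have "Re z * sqrt x > -1"
  proof (cases "Re z \<ge> 0")
    case True
    then show ?thesis using mult_nonneg_nonneg[OF True s(1)] by linarith
  next
    case False
    then have "Re z * sqrt x \<ge> Re z * 1" using s by (intro mult_left_mono_neg) auto
    then show ?thesis using assms(1) by linarith
  qed
  then show ?thesis by simp
qed

lemma continuous_on_powr_Re_pos: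
  assumes "continuous_on A f" and "\<And>x. x \<in> A \<Longrightarrow> Re (f x) > 0"
  shows "continuous_on A (\<lambda>x. f x powr b)"
  using assms by (intro continuous_on_powr_complex continuous_on_const) (fastforce simp: order.strict_implies_order)+

lemma holomorphic_on_beta_root_moment:
  assumes "\<alpha> > 0" "\<beta> > 0" "k > - \<alpha>"
  shows "beta_root_moment \<alpha> \<beta> k a holomorphic_on {z. Re z > -1}"
proof -
  define w where "w x = beta_density \<alpha> \<beta> x * x powr k" for x
  define U where "U = {z :: complex. Re z > -1}"
  have w: "integrable lborel w"
    unfolding w_def using assms by (intro integrable_beta_density_powr) auto
  have w0: "w x = 0" if "x \<notin> {0..1}" for x
    using that by (auto simp: w_def beta_density_eq_0)
  have U: "open U"
    unfolding U_def by (rule open_halfspace_Re_gt)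
  have pos: "Re (1 + z * of_real (sqrt x)) > 0" if "(z, x) \<in> U \<times> {0..1}" for z x
    using that Re_one_plus_mult_sqrt_pos by (auto simp: U_def)
  have "\<exists>D. ((\<lambda>z. LINT x|lborel. w x *\<^sub>R (1 + z * of_real (sqrt x)) powr (- a)) has_field_derivative D) (at z0)"
    if z0: "z0 \<in> U" for z0
  proof (rule exI, rule has_field_derivative_integral_param[where U = U and K = "{0..1}" and w = w
        and h = "\<lambda>z x. (1 + z * of_real (sqrt x)) powr (- a)"
        and h' = "\<lambda>z x. - a * (1 + z * of_real (sqrt x)) powr (- a - 1) * of_real (sqrt x)"])
    show "((\<lambda>z. (1 + z * of_real (sqrt x)) powr - a) has_field_derivative
             - a * (1 + z * of_real (sqrt x)) powr (- a - 1) * of_real (sqrt x)) (at z)"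
      if "z \<in> U" "x \<in> {0..1}" for z x
      using pos[of z x] that by (auto intro!: derivative_eq_intros simp: complex_nonpos_Reals_iff)
    show "continuous_on {0..1} (\<lambda>x. (1 + z * of_real (sqrt x)) powr - a)" if "z \<in> U" for z
      using pos that by (intro continuous_on_powr_Re_pos continuous_intros) auto
    have cont_pow: "continuous_on (U \<times> {0..1}) (\<lambda>p. (1 + fst p * of_real (sqrt (snd p))) powr (- a - 1))"
      using pos by (intro continuous_on_powr_Re_pos continuous_intros) auto
    show "continuous_on (U \<times> {0..1})
        (\<lambda>(z, x). - a * (1 + z * of_real (sqrt x)) powr (- a - 1) * of_real (sqrt x))"
      unfolding split_beta by (intro continuous_intros cont_pow)
  qed (use U z0 w w0 in auto)
  then show ?thesis
    unfolding beta_root_moment_def w_def[symmetric] U_def[symmetric]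
    by (simp add: holomorphic_on_open U)
qed

section \<open>Termwise integration of the binomial series\<close>

lemma summable_norm_gbinomial_powser:
  fixes z :: complex
  assumes "norm z < 1"
  shows "summable (\<lambda>m. norm ((a gchoose m) * z ^ m))"
proof -
  define \<rho> where "\<rho> = (1 + norm z) / 2"
  have \<rho>: "norm z < \<rho>" "\<rho> < 1" using assms by (auto simp: \<rho>_def)
  then have "summable (\<lambda>m. (a gchoose m) * complex_of_real \<rho> ^ m)"
    using gen_binomial_complex[of "complex_of_real \<rho>" a] norm_ge_zero[of z] by (auto intro: sums_summable)
  then show ?thesis
    by (rule powser_insidea) (use \<rho> norm_ge_zero[of z] in auto)
qed

lemma suminf_mult_of_summable:
  fixes f :: "nat \<Rightarrow> 'a::real_normed_field"
  assumes "summable (\<lambda>n. c * f n)"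
  shows "(\<Sum>n. c * f n) = c * suminf f"
  using assms by (cases "c = 0") (simp_all add: suminf_mult)

lemma integral_powser_sums:
  fixes w :: "real \<Rightarrow> real" and g :: "real \<Rightarrow> complex" and c :: "nat \<Rightarrow> complex"
  assumes w: "integrable lborel w" and w0: "\<And>x. x \<notin> K \<Longrightarrow> w x = 0"
    and K: "compact K" and g: "continuous_on K g" and g1: "\<And>x. x \<in> K \<Longrightarrow> norm (g x) \<le> 1"
    and c: "summable (\<lambda>m. norm (c m))"
  shows "(\<lambda>m. c m * (LINT x|lborel. w x *\<^sub>R g x ^ m))
           sums (LINT x|lborel. w x *\<^sub>R (\<Sum>m. c m * g x ^ m))"
    and "summable (\<lambda>m. norm (c m * (LINT x|lborel. w x *\<^sub>R g x ^ m)))"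
proof -
  define f where "f m x = c m * (w x *\<^sub>R g x ^ m)" for m x
  have int_f: "integrable lborel (f m)" for m
    unfolding f_def using w w0 K continuous_on_power[OF g]
    by (intro integrable_mult_right integrable_scaleR_continuous_on_compact)
  have integral_f: "integral\<^sup>L lborel (f m) = c m * (LINT x|lborel. w x *\<^sub>R g x ^ m)" for m
    unfolding f_def[abs_def] by (rule integral_mult_right_zero)
  have bound: "norm (f m x) \<le> \<bar>w x\<bar> * norm (c m)" for m x
  proof (cases "x \<in> K")
    case True
    then have "norm (g x ^ m) \<le> 1"
      using g1 by (simp add: norm_power power_le_one)
    then have "norm (c m) * norm (g x ^ m) \<le> norm (c m)"
      by (simp add: mult_right_le_one_le)
    then show ?thesis
      by (simp add: f_def norm_mult mult_left_mono)
  qed (simp add: f_def w0)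
  have summable_norm_f: "summable (\<lambda>m. norm (f m x))" for x
    by (rule summable_comparison_test'[OF summable_mult[OF c, of "\<bar>w x\<bar>"]]) (simp add: bound)
  have "summable (\<lambda>m. LINT x|lborel. norm (f m x))"
  proof (rule summable_comparison_test'[OF summable_mult2[OF c, of "LINT x|lborel. \<bar>w x\<bar>"]])
    show "norm (LINT x|lborel. norm (f m x)) \<le> norm (c m) * (LINT x|lborel. \<bar>w x\<bar>)" for m
      using integral_mono[OF integrable_norm[OF int_f] _ bound] w
      by (simp add: integral_nonneg_AE mult.commute)
  qed
  from sums_integral[OF int_f AE_I2[OF summable_norm_f] this]
  have "(\<lambda>m. integral\<^sup>L lborel (f m)) sums (LINT x|lborel. (\<Sum>m. f m x))" .
  moreover have "(\<Sum>m. f m x) = w x *\<^sub>R (\<Sum>m. c m * g x ^ m)" for x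
  proof -
    have "f m x = of_real (w x) * (c m * g x ^ m)" for m
      by (simp add: f_def scaleR_conv_of_real mult.left_commute)
    then show ?thesis
      using summable_norm_cancel[OF summable_norm_f[of x]]
      by (simp add: suminf_mult_of_summable scaleR_conv_of_real)
  qed
  ultimately show "(\<lambda>m. c m * (LINT x|lborel. w x *\<^sub>R g x ^ m))
      sums (LINT x|lborel. w x *\<^sub>R (\<Sum>m. c m * g x ^ m))"
    by (simp add: integral_f)
  have "summable (\<lambda>m. norm (integral\<^sup>L lborel (f m)))"
    by (rule summable_comparison_test'[OF \<open>summable (\<lambda>m. LINT x|lborel. norm (f m x))\<close>])
       simp
  then show "summable (\<lambda>m. norm (c m * (LINT x|lborel. w x *\<^sub>R g x ^ m)))"
    by (simp add: integral_f)
qed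

lemma beta_root_moment_sums:
  fixes a z :: complex
  assumes "\<alpha> > 0" "\<beta> > 0" "k > - \<alpha>" and z: "norm z < 1"
  defines "t \<equiv> \<lambda>m. ((- a) gchoose m) * z ^ m * of_real (Beta (\<alpha> + k + real m / 2) \<beta> / Beta \<alpha> \<beta>)"
  shows "t sums beta_root_moment \<alpha> \<beta> k a z" and "summable (\<lambda>m. norm (t m))"
proof -
  define w where "w x = beta_density \<alpha> \<beta> x * x powr k" for x
  define c where "c m = ((- a) gchoose m) * z ^ m" for m
  have w: "integrable lborel w"
    unfolding w_def using assms by (intro integrable_beta_density_powr) auto
  have w0: "w x = 0" if "x \<notin> {0..1}" for x
    using that by (auto simp: w_def beta_density_eq_0)
  have moment: "(LINT x|lborel. w x *\<^sub>R complex_of_real (sqrt x) ^ m)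
      = complex_of_real (Beta (\<alpha> + k + real m / 2) \<beta> / Beta \<alpha> \<beta>)" for m
    unfolding w_def using assms by (intro integral_beta_density_powr_sqrt_power) auto
  have binomial: "(\<Sum>m. c m * of_real (sqrt x) ^ m) = (1 + z * of_real (sqrt x)) powr (- a)" if "x \<in> {0..1}" for x
  proof -
    have "norm (z * of_real (sqrt x)) < 1"
      using that z by (auto simp: norm_mult intro: le_less_trans[OF mult_left_le])
    from sums_unique[OF gen_binomial_complex[OF this, of "- a"]]
    show ?thesis by (simp add: c_def power_mult_distrib mult.assoc)
  qed
  have "(LINT x|lborel. w x *\<^sub>R (\<Sum>m. c m * of_real (sqrt x) ^ m)) = beta_root_moment \<alpha> \<beta> k a z"
    unfolding beta_root_moment_def w_def[symmetric]
  proof (rule Bochner_Integration.integral_cong)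
    show "w x *\<^sub>R (\<Sum>m. c m * of_real (sqrt x) ^ m) = w x *\<^sub>R (1 + z * of_real (sqrt x)) powr (- a)" for x
      using binomial[of x] w0[of x] by (cases "x \<in> {0..1}") auto
  qed simp
  moreover have "t = (\<lambda>m. c m * (LINT x|lborel. w x *\<^sub>R of_real (sqrt x) ^ m))"
    by (simp add: t_def c_def moment)
  moreover have "continuous_on {0..1} (\<lambda>x. complex_of_real (sqrt x))"
    by (intro continuous_intros)
  moreover have "summable (\<lambda>m. norm (c m))"
    unfolding c_def by (rule summable_norm_gbinomial_powser[OF z])
  ultimately show "t sums beta_root_moment \<alpha> \<beta> k a z" and "summable (\<lambda>m. norm (t m))"
    using integral_powser_sums[OF w w0 compact_Icc, where g = "\<lambda>x. of_real (sqrt x)" and c = c]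
    by auto
qed

section \<open>Hypergeometric form\<close>

lemma pochhammer_real_Gamma: "x > 0 \<Longrightarrow> pochhammer (x::real) n = Gamma (x + real n) / Gamma x"
  by (rule pochhammer_Gamma) (auto elim!: nonpos_Ints_cases)

lemma Beta_add_nat:
  fixes x y :: real
  assumes "x > 0" "y > 0"
  shows "Beta (x + real n) y = Beta x y * pochhammer x n / pochhammer (x + y) n"
  using assms by (simp add: Beta_def pochhammer_real_Gamma field_simps
      Gamma_real_pos[THEN less_imp_neq, THEN not_sym])

lemma Beta_ratio_eq_poch_r:
  fixes x y c :: real
  assumes "x > 0" "y > 0" "x + c > 0"
  shows "Beta (x + c) y / Beta x y = poch_r x c / poch_r (x + y) c"
  using assms by (simp add: Beta_def poch_r_def field_simps
      Gamma_real_pos[THEN less_imp_neq, THEN not_sym])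

lemma poch_r_add:
  assumes "x + a > 0"
  shows "poch_r x (a + b) = poch_r x a * poch_r (x + a) b"
  using Gamma_real_pos[OF assms] by (simp add: poch_r_def add.assoc)

lemma pochhammer_double_half:
  fixes c :: "'a::field_char_0"
  shows "pochhammer c (2 * n) = 4 ^ n * pochhammer (c / 2) n * pochhammer ((c + 1) / 2) n"
  using pochhammer_double[of "c / 2" n] by (simp add: power_mult add_divide_distrib)

lemma gbinomial_minus_even:
  fixes a :: "'a::field_char_0"
  shows "(- a) gchoose (2 * n) = pochhammer (a / 2) n * pochhammer ((a + 1) / 2) n / (pochhammer (1 / 2) n * fact n)"
  by (simp add: gbinomial_pochhammer pochhammer_double_half fact_double power_mult)

lemma gbinomial_minus_odd:
  fixes a :: "'a::field_char_0"
  shows "(- a) gchoose (Suc (2 * n))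
           = - a * pochhammer ((a + 1) / 2) n * pochhammer ((a + 2) / 2) n / (pochhammer (3 / 2) n * fact n)"
proof -
  have "fact (Suc (2 * n)) = (pochhammer 2 (2 * n) :: 'a)"
    by (simp add: pochhammer_fact pochhammer_rec)
  also have "\<dots> = 4 ^ n * (pochhammer (3 / 2) n * fact n)"
    by (simp add: pochhammer_double_half pochhammer_fact)
  finally have fact: "fact (Suc (2 * n)) = (4 ^ n * (pochhammer (3 / 2) n * fact n) :: 'a)" .
  have poch: "pochhammer a (Suc (2 * n)) = 4 ^ n * (a * pochhammer ((a + 1) / 2) n * pochhammer ((a + 2) / 2) n)"
    by (simp add: pochhammer_rec pochhammer_double_half add_ac)
  have "(- a) gchoose (Suc (2 * n))
      = 4 ^ n * (- a * pochhammer ((a + 1) / 2) n * pochhammer ((a + 2) / 2) n)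
        / (4 ^ n * (pochhammer (3 / 2) n * fact n))"
    unfolding gbinomial_pochhammer minus_minus power_minus1_odd fact poch by simp
  then show ?thesis
    by simp
qed

lemma Beta_ratio_even:
  assumes "\<alpha> > 0" "\<beta> > 0" "k > - \<alpha>"
  shows "Beta (\<alpha> + k + real (2 * n) / 2) \<beta> / Beta \<alpha> \<beta>
           = poch_r \<alpha> k / poch_r (\<alpha> + \<beta>) k * pochhammer (\<alpha> + k) n / pochhammer (\<alpha> + \<beta> + k) n"
proof -
  have "Beta (\<alpha> + k + real (2 * n) / 2) \<beta> / Beta \<alpha> \<beta>
      = Beta (\<alpha> + k) \<beta> / Beta \<alpha> \<beta> * pochhammer (\<alpha> + k) n / pochhammer (\<alpha> + \<beta> + k) n"
    using Beta_add_nat[of "\<alpha> + k" \<beta> n] assms by (simp add: add_ac)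
  also have "Beta (\<alpha> + k) \<beta> / Beta \<alpha> \<beta> = poch_r \<alpha> k / poch_r (\<alpha> + \<beta>) k"
    using Beta_ratio_eq_poch_r[of \<alpha> \<beta> k] assms by simp
  finally show ?thesis .
qed

lemma Beta_ratio_odd:
  assumes "\<alpha> > 0" "\<beta> > 0" "k > - \<alpha>"
  shows "Beta (\<alpha> + k + real (Suc (2 * n)) / 2) \<beta> / Beta \<alpha> \<beta>
           = poch_r \<alpha> k / poch_r (\<alpha> + \<beta>) k * (poch_r (\<alpha> + k) (1 / 2) / poch_r (\<alpha> + \<beta> + k) (1 / 2))
             * pochhammer (\<alpha> + k + 1 / 2) n / pochhammer (\<alpha> + \<beta> + k + 1 / 2) n"
proof -
  have "Beta (\<alpha> + k + real (Suc (2 * n)) / 2) \<beta> / Beta \<alpha> \<beta>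
      = Beta (\<alpha> + (k + 1 / 2)) \<beta> / Beta \<alpha> \<beta>
        * pochhammer (\<alpha> + k + 1 / 2) n / pochhammer (\<alpha> + \<beta> + k + 1 / 2) n"
    using Beta_add_nat[of "\<alpha> + k + 1 / 2" \<beta> n] assms by (simp add: add_ac add_divide_distrib)
  also have "Beta (\<alpha> + (k + 1 / 2)) \<beta> / Beta \<alpha> \<beta>
      = poch_r \<alpha> k / poch_r (\<alpha> + \<beta>) k * (poch_r (\<alpha> + k) (1 / 2) / poch_r (\<alpha> + \<beta> + k) (1 / 2))"
    using Beta_ratio_eq_poch_r[of \<alpha> \<beta> "k + 1 / 2"] poch_r_add[of \<alpha> k "1 / 2"]
      poch_r_add[of "\<alpha> + \<beta>" k "1 / 2"] assms
    by (simp add: add_ac)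
  finally show ?thesis .
qed

lemma pochhammer_complex_neq_0: "Re c > 0 \<Longrightarrow> pochhammer (c :: complex) n \<noteq> 0"
  by (auto simp: pochhammer_eq_0_iff)

lemma suminf_split_even_odd:
  fixes t :: "nat \<Rightarrow> 'a::banach"
  assumes "summable (\<lambda>m. norm (t m))"
  shows "summable (\<lambda>n. t (2 * n))" and "summable (\<lambda>n. t (Suc (2 * n)))"
    and "suminf t = (\<Sum>n. t (2 * n)) + (\<Sum>n. t (Suc (2 * n)))"
proof -
  have "(\<lambda>n. norm (t (2 * n)) + norm (t (Suc (2 * n)))) sums (\<Sum>m. norm (t m))"
    using sums_group[OF summable_sums[OF assms], of 2] by (simp add: mult.commute numeral_2_eq_2)
  then have pairs: "summable (\<lambda>n. norm (t (2 * n)) + norm (t (Suc (2 * n))))"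
    by (rule sums_summable)
  show even: "summable (\<lambda>n. t (2 * n))" and odd: "summable (\<lambda>n. t (Suc (2 * n)))"
    by (rule summable_comparison_test'[OF pairs], simp)+
  have "(\<lambda>n. t (2 * n) + t (Suc (2 * n))) sums suminf t"
    using sums_group[OF summable_sums[OF summable_norm_cancel[OF assms]], of 2]
    by (simp add: mult.commute numeral_2_eq_2)
  then show "suminf t = (\<Sum>n. t (2 * n)) + (\<Sum>n. t (Suc (2 * n)))"
    using suminf_add[OF even odd] sums_unique by metis
qed

lemma beta_root_moment_eq_hyp3F2:
  fixes a z :: complex
  assumes "\<alpha> > 0" "\<beta> > 0" "k > - \<alpha>" and z: "norm z < 1"
  shows "beta_root_moment \<alpha> \<beta> k a z =
          complex_of_real (poch_r \<alpha> k / poch_r (\<alpha> + \<beta>) k) *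
          (hyp3F2 (a / 2) ((a + 1) / 2) (of_real (\<alpha> + k)) (1 / 2) (of_real (\<alpha> + \<beta> + k)) (z ^ 2)
           - z * a * complex_of_real (poch_r (\<alpha> + k) (1 / 2) / poch_r (\<alpha> + \<beta> + k) (1 / 2))
             * hyp3F2 ((a + 1) / 2) ((a + 2) / 2) (of_real (\<alpha> + k + 1 / 2)) (3 / 2)
                      (of_real (\<alpha> + \<beta> + k + 1 / 2)) (z ^ 2))"
proof -
  define P where "P = poch_r \<alpha> k / poch_r (\<alpha> + \<beta>) k"
  define Q where "Q = poch_r (\<alpha> + k) (1 / 2) / poch_r (\<alpha> + \<beta> + k) (1 / 2)"
  define t where "t m = ((- a) gchoose m) * z ^ m * of_real (Beta (\<alpha> + k + real m / 2) \<beta> / Beta \<alpha> \<beta>)" for m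
  define ev where "ev n = pochhammer (a / 2) n * pochhammer ((a + 1) / 2) n * pochhammer (complex_of_real (\<alpha> + k)) n
      / (pochhammer (1 / 2) n * pochhammer (complex_of_real (\<alpha> + \<beta> + k)) n) * (z ^ 2) ^ n / fact n" for n
  define od where "od n = pochhammer ((a + 1) / 2) n * pochhammer ((a + 2) / 2) n * pochhammer (complex_of_real (\<alpha> + k + 1 / 2)) n
      / (pochhammer (3 / 2) n * pochhammer (complex_of_real (\<alpha> + \<beta> + k + 1 / 2)) n) * (z ^ 2) ^ n / fact n" for n
  define K where "K = - (of_real P * z * a * of_real Q)"
  have nonzero: "pochhammer (1 / 2 :: complex) n \<noteq> 0" "pochhammer (3 / 2 :: complex) n \<noteq> 0"
      "pochhammer (\<alpha> + \<beta> + k) n \<noteq> 0" "pochhammer (\<alpha> + \<beta> + k + 1 / 2) n \<noteq> 0" for n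
    using assms by (auto intro!: pochhammer_complex_neq_0 pochhammer_pos[THEN less_imp_neq, THEN not_sym])
  have even: "t (2 * n) = of_real P * ev n" for n
  proof -
    have "t (2 * n) = pochhammer (a / 2) n * pochhammer ((a + 1) / 2) n / (pochhammer (1 / 2) n * fact n)
        * (z ^ 2) ^ n * (of_real P * of_real (pochhammer (\<alpha> + k) n) / of_real (pochhammer (\<alpha> + \<beta> + k) n))"
      by (simp only: t_def gbinomial_minus_even Beta_ratio_even[OF assms(1-3), folded P_def] power_mult of_real_mult of_real_divide)
    then show ?thesis
      unfolding ev_def pochhammer_of_real using nonzero[of n] by (simp add: field_simps)
  qed
  have odd: "t (Suc (2 * n)) = K * od n" for n
  proof -
    have "t (Suc (2 * n)) = - a * pochhammer ((a + 1) / 2) n * pochhammer ((a + 2) / 2) n / (pochhammer (3 / 2) n * fact n)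
        * (z * (z ^ 2) ^ n) * (of_real P * of_real Q * of_real (pochhammer (\<alpha> + k + 1 / 2) n)
          / of_real (pochhammer (\<alpha> + \<beta> + k + 1 / 2) n))"
      by (simp only: t_def gbinomial_minus_odd Beta_ratio_odd[OF assms(1-3), folded P_def Q_def]
          power_mult power_Suc of_real_mult of_real_divide)
    then show ?thesis
      unfolding od_def K_def pochhammer_of_real using nonzero[of n] by (simp add: field_simps)
  qed
  have "summable (\<lambda>m. norm (t m))" and t: "t sums beta_root_moment \<alpha> \<beta> k a z"
    using beta_root_moment_sums[OF assms, of a] by (simp_all add: t_def[abs_def])
  note split = suminf_split_even_odd[OF this(1)]
  have "beta_root_moment \<alpha> \<beta> k a z = of_real P * suminf ev + K * suminf od"
    using split(1,2) sums_unique[OF t] split(3)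
    by (simp add: even odd suminf_mult_of_summable)
  moreover have "suminf ev = hyp3F2 (a / 2) ((a + 1) / 2) (of_real (\<alpha> + k)) (1 / 2) (of_real (\<alpha> + \<beta> + k)) (z ^ 2)"
    by (simp only: hyp3F2_def ev_def[abs_def])
  moreover have "suminf od = hyp3F2 ((a + 1) / 2) ((a + 2) / 2) (of_real (\<alpha> + k + 1 / 2)) (3 / 2)
      (of_real (\<alpha> + \<beta> + k + 1 / 2)) (z ^ 2)"
    by (simp only: hyp3F2_def od_def[abs_def])
  ultimately show ?thesis
    by (simp add: P_def Q_def K_def algebra_simps)
qed

lemma hyp3F2_cancel_left:
  "(\<And>n. pochhammer c n \<noteq> 0) \<Longrightarrow> hyp3F2 c a b c d t = hyp2F1 a b d t"
  unfolding hyp3F2_def hyp2F1_def by (simp add: field_simps)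

lemma hyp3F2_cancel_middle:
  "(\<And>n. pochhammer c n \<noteq> 0) \<Longrightarrow> hyp3F2 a c b c d t = hyp2F1 a b d t"
  unfolding hyp3F2_def hyp2F1_def by (simp add: field_simps)

lemma poch_r_0:
  assumes "x > 0"
  shows "poch_r x 0 = 1"
  using Gamma_real_pos[OF assms] by (simp add: poch_r_def)

lemma beta_root_moment_eq_hyp2F1:
  fixes z :: complex
  assumes "\<alpha> > 0" "\<beta> > 0" and "norm z < 1"
  shows "beta_root_moment \<alpha> \<beta> 0 1 z =
           hyp2F1 1 (of_real \<alpha>) (of_real (\<alpha> + \<beta>)) (z ^ 2)
           - z * complex_of_real (poch_r \<alpha> (1 / 2) / poch_r (\<alpha> + \<beta>) (1 / 2))
             * hyp2F1 1 (of_real (\<alpha> + 1 / 2)) (of_real (\<alpha> + \<beta> + 1 / 2)) (z ^ 2)"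
proof -
  have "pochhammer (1 / 2 :: complex) n \<noteq> 0" "pochhammer (3 / 2 :: complex) n \<noteq> 0" for n
    by (simp_all add: pochhammer_complex_neq_0)
  then show ?thesis
    using beta_root_moment_eq_hyp3F2[of \<alpha> \<beta> 0 z 1] assms
    by (simp add: poch_r_0 hyp3F2_cancel_left hyp3F2_cancel_middle)
qed

lemma integral_reciprocal_eq_beta_root_moment:
  assumes distr: "distributed M lborel \<xi> (\<lambda>x. ennreal (beta_density \<alpha> \<beta> x))"
    and "\<alpha> > 0" "\<beta> > 0"
  shows "complex_of_real (\<integral>\<omega>. 1 / (1 + s * sqrt (\<xi> \<omega>)) \<partial>M) = beta_root_moment \<alpha> \<beta> 0 1 (of_real s)"
proof -
  have [measurable]: "\<xi> \<in> borel_measurable M"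
    using distributed_measurable[OF distr] by simp
  \<comment> \<open>\<open>\<xi> \<omega> powr 0 = 1\<close> needs \<open>\<xi> \<omega> \<noteq> 0\<close>, which holds almost surely.\<close>
  have "complex_of_real (\<integral>\<omega>. 1 / (1 + s * sqrt (\<xi> \<omega>)) \<partial>M)
      = (\<integral>\<omega>. of_real (\<xi> \<omega> powr 0) / (1 + of_real s * of_real (sqrt (\<xi> \<omega>))) powr 1 \<partial>M)"
    unfolding integral_complex_of_real[symmetric]
    using AE_beta_distributed_in_unit_interval[OF distr]
    by (intro integral_cong_AE) (auto elim!: eventually_mono)
  also have "\<dots> = beta_root_moment \<alpha> \<beta> 0 1 (of_real s)"
    by (rule integral_eq_beta_root_moment[OF assms])
  finally show ?thesis .
qed

theorem lemma6p2:
  fixes M :: "'w measure" and \<xi> :: "'w \<Rightarrow> real"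
    and \<alpha> \<beta> k :: real and a :: complex
  assumes "prob_space M"
    and "\<alpha> > 0" and "\<beta> > 0"
    and "distributed M lborel \<xi> (\<lambda>x. ennreal (beta_density \<alpha> \<beta> x))"
    and "k > - \<alpha>"
  shows
   "(\<exists>F S. open S \<and> connected S \<and> ball 0 1 \<subseteq> S \<and> complex_of_real ` {-1<..} \<subseteq> S \<and>
       F holomorphic_on S \<and>
       (\<forall>z\<in>ball 0 1. F z =
          complex_of_real (poch_r \<alpha> k / poch_r (\<alpha> + \<beta>) k) *
          (hyp3F2 (a / 2) ((a + 1) / 2) (of_real (\<alpha> + k)) (1 / 2) (of_real (\<alpha> + \<beta> + k)) (z ^ 2)
           - z * a * complex_of_real (poch_r (\<alpha> + k) (1 / 2) / poch_r (\<alpha> + \<beta> + k) (1 / 2))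
             * hyp3F2 ((a + 1) / 2) ((a + 2) / 2) (of_real (\<alpha> + k + 1 / 2)) (3 / 2)
                      (of_real (\<alpha> + \<beta> + k + 1 / 2)) (z ^ 2))) \<and>
       (\<forall>s::real. s > -1 \<longrightarrow>
          F (complex_of_real s) =
          integral\<^sup>L M (\<lambda>\<omega>. complex_of_real (\<xi> \<omega> powr k)
                              / (complex_of_real (1 + s * sqrt (\<xi> \<omega>))) powr a)))
    \<and> (\<forall>p::nat. p \<ge> 2 \<longrightarrow> \<beta> = (real p - 1) * \<alpha> \<longrightarrow>
       (\<exists>F S. open S \<and> connected S \<and> ball 0 1 \<subseteq> S \<and> complex_of_real ` {-1<..} \<subseteq> S \<and>
         F holomorphic_on S \<and>
         (\<forall>z\<in>ball 0 1. F z =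
            hyp2F1 1 (of_real \<alpha>) (of_real (real p * \<alpha>)) (z ^ 2)
            - z * complex_of_real (poch_r \<alpha> (1 / 2) / poch_r (real p * \<alpha>) (1 / 2))
              * hyp2F1 1 (of_real (\<alpha> + 1 / 2)) (of_real (real p * \<alpha> + 1 / 2)) (z ^ 2)) \<and>
         (\<forall>s::real. s > -1 \<longrightarrow>
            F (complex_of_real s) =
            complex_of_real (integral\<^sup>L M (\<lambda>\<omega>. 1 / (1 + s * sqrt (\<xi> \<omega>)))))))"
proof -
  note distr = assms(4) and params = assms(2,3)
  define S where "S = {z :: complex. Re z > -1}"
  have "Re z > -1" if "norm z < 1" for z
    using abs_Re_le_cmod[of z] that by linarith
  then have S: "open S" "connected S" "ball 0 1 \<subseteq> S" "complex_of_real ` {-1<..} \<subseteq> S"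
    by (auto simp: S_def open_halfspace_Re_gt connected_halfspace_Re_gt)
  have holomorphic: "beta_root_moment \<alpha> \<beta> k' a' holomorphic_on S" if "k' > - \<alpha>" for k' a'
    unfolding S_def using holomorphic_on_beta_root_moment[OF params that] .
  show ?thesis (is "?general \<and> (\<forall>p. _ \<longrightarrow> _ \<longrightarrow> ?special p)")
  proof (intro conjI allI impI)
    show ?general
      by (intro exI[of _ "beta_root_moment \<alpha> \<beta> k a"] exI[of _ S] conjI S holomorphic assms(5) ballI allI impI
          beta_root_moment_eq_hyp3F2[OF params assms(5)])
         (auto simp: integral_eq_beta_root_moment[OF distr params])
  next
    fix p :: nat assume "\<beta> = (real p - 1) * \<alpha>"
    then have p: "real p * \<alpha> = \<alpha> + \<beta>" by (simp add: algebra_simps)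
    show "?special p"
      unfolding p
      using beta_root_moment_eq_hyp2F1[OF params] integral_reciprocal_eq_beta_root_moment[OF distr params]
      by (intro exI[of _ "beta_root_moment \<alpha> \<beta> 0 1"] exI[of _ S] conjI S holomorphic ballI allI impI)
         (use params in auto)
  qed
qed

end
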